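(* Let $V$ be a real vector space and $C$ a cone in $V$. Suppose $X$ and $S$ are $C$-antichain-convex subsets of $V$ with $S\subseteq X$, and $R$ is a total and $C$-antichain-convex relation on $X$. Then $\mathcal{M}(R,S)$ is $C$-antichain-convex.
   Context: A cone in $V$ is a subset $C$ with $\lambda C\subseteq C$ for all $\lambda>0$ (possibly empty, need not contain $0$). $A\subseteq V$ is $C$-antichain-convex iff for all $x,y\in A$ and $\lambda\in[0,1]$ with $y-x\notin C\cup(-C)$ one has $\lambda x+(1-\lambda)y\in A$. For a relation $R\subseteq X\times X$, $R(x)=\{t\in X:(t,x)\in R\}$; $R$ is total iff for all $s,t\in X$, $t\in R(s)$ or $s\in R(t)$; $R$ is $C$-antichain-convex iff $R(x)$ is $C$-antichain-convex for every $x\in X$. For $S\subseteq X$, $m\in S$ is $R$-maximal on $S$ iff for every $s\in S$ with $s\in R(m)$ one has $m\in R(s)$; $\mathcal{M}(R,S)$ is the set of $R$-maximals on $S$. *)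

theory Defs
  imports "HOL-Analysis.Analysis"
begin

definition is_cone :: "'a::real_vector set \<Rightarrow> bool" where
  "is_cone C \<longleftrightarrow> (\<forall>l::real. l > 0 \<longrightarrow> (\<lambda>v. l *\<^sub>R v) ` C \<subseteq> C)"

definition antichain_convex :: "'a::real_vector set \<Rightarrow> 'a set \<Rightarrow> bool" where
  "antichain_convex C A \<longleftrightarrow>
     (\<forall>x\<in>A. \<forall>y\<in>A. \<forall>l::real. 0 \<le> l \<and> l \<le> 1 \<and> y - x \<notin> C \<union> uminus ` C
        \<longrightarrow> l *\<^sub>R x + (1 - l) *\<^sub>R y \<in> A)"

definition upper_set :: "('a \<times> 'a) set \<Rightarrow> 'a set \<Rightarrow> 'a \<Rightarrow> 'a set" where
  "upper_set R X x = {t \<in> X. (t, x) \<in> R}"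

definition rel_total :: "'a set \<Rightarrow> ('a \<times> 'a) set \<Rightarrow> bool" where
  "rel_total X R \<longleftrightarrow> (\<forall>s\<in>X. \<forall>t\<in>X. t \<in> upper_set R X s \<or> s \<in> upper_set R X t)"

definition rel_antichain_convex :: "'a::real_vector set \<Rightarrow> 'a set \<Rightarrow> ('a \<times> 'a) set \<Rightarrow> bool" where
  "rel_antichain_convex C X R \<longleftrightarrow> (\<forall>x\<in>X. antichain_convex C (upper_set R X x))"

definition maximals :: "'a set \<Rightarrow> ('a \<times> 'a) set \<Rightarrow> 'a set \<Rightarrow> 'a set" where
  "maximals X R S = {m \<in> S. \<forall>s\<in>S. s \<in> upper_set R X m \<longrightarrow> m \<in> upper_set R X s}"

end

theory Submission
  imports Defs
begin

text \<open>For a total relation a maximal element of S dominates every element of S, so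
  \<open>\<M>(R,S) = S \<inter> (\<Inter>s\<in>S. R(s))\<close>, an intersection of antichain-convex sets.\<close>

lemma antichain_convex_Inter:
  assumes "\<And>A. A \<in> \<A> \<Longrightarrow> antichain_convex C A"
  shows "antichain_convex C (\<Inter>\<A>)"
  using assms unfolding antichain_convex_def by blast

lemma antichain_convex_Int:
  assumes "antichain_convex C A" and "antichain_convex C B"
  shows "antichain_convex C (A \<inter> B)"
  using antichain_convex_Inter[of "{A, B}"] assms by auto

lemma maximals_eq_greatest:
  assumes "rel_total X R" and "S \<subseteq> X"
  shows "maximals X R S = S \<inter> (\<Inter>s\<in>S. upper_set R X s)"
proof
  show "maximals X R S \<subseteq> S \<inter> (\<Inter>s\<in>S. upper_set R X s)"
  proof
    fix m assume m: "m \<in> maximals X R S"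
    then have "m \<in> S" unfolding maximals_def by blast
    have "m \<in> upper_set R X s" if "s \<in> S" for s
    proof -
      have "m \<in> upper_set R X s \<or> s \<in> upper_set R X m"
        using assms \<open>m \<in> S\<close> \<open>s \<in> S\<close> unfolding rel_total_def by blast
      then show ?thesis using m \<open>s \<in> S\<close> unfolding maximals_def by blast
    qed
    with \<open>m \<in> S\<close> show "m \<in> S \<inter> (\<Inter>s\<in>S. upper_set R X s)" by blast
  qed
  show "S \<inter> (\<Inter>s\<in>S. upper_set R X s) \<subseteq> maximals X R S"
    unfolding maximals_def by blast
qed

theorem theorem11:
  fixes C X S :: "'a::real_vector set" and R :: "('a \<times> 'a) set"
  assumes "is_cone C"
    and "antichain_convex C X"
    and "antichain_convex C S"
    and "S \<subseteq> X"
    and "R \<subseteq> X \<times> X"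
    and "rel_total X R"
    and "rel_antichain_convex C X R"
  shows "antichain_convex C (maximals X R S)"
proof -
  have "antichain_convex C (upper_set R X s)" if "s \<in> S" for s
    using assms(4,7) that unfolding rel_antichain_convex_def by blast
  then have "antichain_convex C (\<Inter>s\<in>S. upper_set R X s)"
    by (auto intro: antichain_convex_Inter)
  then show ?thesis
    using assms(3) by (simp add: maximals_eq_greatest[OF assms(6,4)] antichain_convex_Int)
qed

end
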